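(* Let $\mathbf{u}_j\in c_0$, $j\in\mathbb{N}_m$, $\mathcal{L}(\mathbf{x}):=[\langle\mathbf{u}_j,\mathbf{x}\rangle:j\in\mathbb{N}_m]$ for $\mathbf{x}\in\ell_1(\mathbb{N})$, and $\mathcal{L}^*(\mathbf{c}):=\sum_{j\in\mathbb{N}_m}c_j\mathbf{u}_j$. Let $\mathbf{y}_0\in\mathbb{R}^m$, let $\mathcal{Q}_{\mathbf{y}_0}:\mathbb{R}^m\to\mathbb{R}_+$ be convex, and $\lambda>0$. Then $\mathbf{x}_0\in\ell_1(\mathbb{N})$ is a solution of $$\inf\{\mathcal{Q}_{\mathbf{y}_0}(\mathcal{L}(\mathbf{x}))+\lambda\|\mathbf{x}\|_1:\mathbf{x}\in\ell_1(\mathbb{N})\}$$ if and only if there exists $\hat{\mathbf{c}}\in\mathbb{R}^m$ such that $$\hat{\mathbf{c}}=\mathrm{prox}_{\mathcal{Q}_{\mathbf{y}_0}^*}(\hat{\mathbf{c}}+\mathcal{L}(\mathbf{x}_0))\quad\text{and}\quad \mathbf{x}_0=\mathrm{prox}_{\|\cdot\|_1,\ell_2(\mathbb{N}),\mathcal{T}_0}\Big(\mathbf{x}_0-\frac1\lambda\mathcal{S}\mathcal{L}^*(\hat{\mathbf{c}})\Big).$$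
   Context: $\mathbb{R}_+:=[0,+\infty)$; $\mathbb{N}_m:=\{1,\dots,m\}$; $c_0$ is the space of real sequences tending to $0$, $\|\mathbf{u}\|_\infty=\sup_j|u_j|$; $\langle\mathbf{u},\mathbf{x}\rangle:=\sum_ju_jx_j$. $\mathcal{Q}_{\mathbf{y}_0}^*(\mathbf{c}):=\sup\{\langle\mathbf{a},\mathbf{c}\rangle_{\mathbb{R}^m}-\mathcal{Q}_{\mathbf{y}_0}(\mathbf{a}):\mathbf{a}\in\mathbb{R}^m\}$ is the convex conjugate. For a convex $\psi:\mathbb{R}^m\to\mathbb{R}\cup\{+\infty\}$, $\mathrm{prox}_\psi(\mathbf{a}):=\arg\min\{\frac12\|\mathbf{a}-\mathbf{c}\|_{\mathbb{R}^m}^2+\psi(\mathbf{c}):\mathbf{c}\in\mathbb{R}^m\}$. $\mathcal{T}_0:\ell_1(\mathbb{N})\to\ell_2(\mathbb{N})$ is the inclusion and $\mathrm{prox}_{\|\cdot\|_1,\ell_2(\mathbb{N}),\mathcal{T}_0}(\mathbf{x}):=\arg\min\{\frac12\|\mathbf{x}-\mathbf{z}\|_2^2+\|\mathbf{z}\|_1:\mathbf{z}\in\ell_1(\mathbb{N})\}=(\max\{|x_j|-1,0\}\mathrm{sign}(x_j):j\in\mathbb{N})$. For $\mathbf{u}\in c_0$, $\mathbb{N}(\mathbf{u}):=\{j:|u_j|=\|\mathbf{u}\|_\infty\}$ and the truncation $\mathcal{S}(\mathbf{u})$ is the sequence equal to $u_j$ for $j\in\mathbb{N}(\mathbf{u})$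 and $0$ otherwise. *)

theory Defs
  imports "HOL-Analysis.Analysis"
begin

text \<open>Real sequences indexed by nat (the paper's index set N = {1,2,...} is relabelled
  to start at 0). R^m is rendered as real^'m with an arbitrary finite index type 'm.\<close>

definition in_l1 :: "(nat \<Rightarrow> real) \<Rightarrow> bool" where
  "in_l1 x \<longleftrightarrow> summable (\<lambda>j. \<bar>x j\<bar>)"

definition l1_norm :: "(nat \<Rightarrow> real) \<Rightarrow> real" where
  "l1_norm x = (\<Sum>j. \<bar>x j\<bar>)"

definition in_c0 :: "(nat \<Rightarrow> real) \<Rightarrow> bool" where
  "in_c0 u \<longleftrightarrow> u \<longlonglongrightarrow> 0"

definition seq_inner :: "(nat \<Rightarrow> real) \<Rightarrow> (nat \<Rightarrow> real) \<Rightarrow> real" where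
  "seq_inner u x = (\<Sum>j. u j * x j)"

definition sup_norm :: "(nat \<Rightarrow> real) \<Rightarrow> real" where
  "sup_norm u = (SUP j. \<bar>u j\<bar>)"

definition trunc_S :: "(nat \<Rightarrow> real) \<Rightarrow> (nat \<Rightarrow> real)" where
  "trunc_S u = (\<lambda>j. if \<bar>u j\<bar> = sup_norm u then u j else 0)"

definition opL :: "('m::finite \<Rightarrow> nat \<Rightarrow> real) \<Rightarrow> (nat \<Rightarrow> real) \<Rightarrow> real^'m" where
  "opL u x = (\<chi> i. seq_inner (u i) x)"

definition opL_adj :: "('m::finite \<Rightarrow> nat \<Rightarrow> real) \<Rightarrow> real^'m \<Rightarrow> (nat \<Rightarrow> real)" where
  "opL_adj u c = (\<lambda>k. \<Sum>i\<in>UNIV. c $ i * u i k)"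

definition conj_fun :: "(real^'m::finite \<Rightarrow> real) \<Rightarrow> real^'m \<Rightarrow> ereal" where
  "conj_fun Q c = (SUP a. ereal (a \<bullet> c - Q a))"

definition prox :: "(real^'m::finite \<Rightarrow> ereal) \<Rightarrow> real^'m \<Rightarrow> real^'m" where
  "prox \<psi> a = (THE c. \<forall>c'. ereal (1/2 * (norm (a - c))\<^sup>2) + \<psi> c
                          \<le> ereal (1/2 * (norm (a - c'))\<^sup>2) + \<psi> c')"

text \<open>prox of the l1 norm w.r.t. l2 and the inclusion T0, via the explicit formula
  given in the paper (soft thresholding).\<close>
definition prox_l1 :: "(nat \<Rightarrow> real) \<Rightarrow> (nat \<Rightarrow> real)" where
  "prox_l1 x = (\<lambda>j. max (\<bar>x j\<bar> - 1) 0 * sgn (x j))"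

end

theory Submission
  imports Defs
begin

(* Since Q is finite and convex on R^m, the minimality of x0 for Q(L x) + lam |x|_1 is equivalent,
   via a hyperplane separating the strict epigraph of Q from the image under L of the epigraph of
   lam |.|_1, to the existence of a subgradient c of Q at L x0 such that x0 minimises the linear
   perturbation lam |x|_1 + <L* c, x>.  By the Moreau decomposition, c is a subgradient of Q at y
   exactly when c = prox_{Q*}(c + y).  The perturbed l1 problem decouples into the coordinatewise
   conditions |(L* c)_j| <= lam, with (L* c)_j = -lam sgn x0_j on the support of x0; as L* c lies
   in c0 its sup norm is attained, and these conditions are precisely the soft-thresholding fixed
   point equation with the truncation S(L* c). *)

definition subgradient :: "('a::real_inner \<Rightarrow> real) \<Rightarrow> 'a \<Rightarrow> 'a \<Rightarrow> bool" where
  "subgradient f y c \<longleftrightarrow> (\<forall>z. f y + c \<bullet> (z - y) \<le> f z)"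

lemma conj_fun_ge: "ereal (y \<bullet> c - Q y) \<le> conj_fun Q c"
  unfolding conj_fun_def by (rule SUP_upper2[of y]) auto

lemma conj_fun_subgradient:
  assumes "subgradient Q y c"
  shows "conj_fun Q c = ereal (c \<bullet> y - Q y)"
proof (rule antisym)
  show "conj_fun Q c \<le> ereal (c \<bullet> y - Q y)"
    unfolding conj_fun_def
  proof (rule SUP_least)
    fix a
    have "Q y + c \<bullet> (a - y) \<le> Q a" using assms unfolding subgradient_def by blast
    then show "ereal (a \<bullet> c - Q a) \<le> ereal (c \<bullet> y - Q y)"
      by (simp add: inner_diff_right inner_commute)
  qed
  show "ereal (c \<bullet> y - Q y) \<le> conj_fun Q c"
    using conj_fun_ge[of y c Q] by (simp add: inner_commute)
qed

lemma prox_eqI: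
  assumes finite: "\<psi> c = ereal v"
    and growth: "\<And>c'. ereal (1/2 * (norm (a - c))\<^sup>2 + v + 1/2 * (norm (c - c'))\<^sup>2)
                      \<le> ereal (1/2 * (norm (a - c'))\<^sup>2) + \<psi> c'"
  shows "prox \<psi> a = c"
  unfolding prox_def
proof (rule the_equality)
  show "\<forall>c'. ereal (1/2 * (norm (a - c))\<^sup>2) + \<psi> c \<le> ereal (1/2 * (norm (a - c'))\<^sup>2) + \<psi> c'"
  proof
    fix c'
    have le: "ereal (1/2 * (norm (a - c))\<^sup>2 + v) \<le> ereal (1/2 * (norm (a - c))\<^sup>2 + v + 1/2 * (norm (c - c'))\<^sup>2)"
      by simp
    show "ereal (1/2 * (norm (a - c))\<^sup>2) + \<psi> c \<le> ereal (1/2 * (norm (a - c'))\<^sup>2) + \<psi> c'"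
      using order_trans[OF le growth[of c']] finite by simp
  qed
next
  fix c''
  assume "\<forall>c'. ereal (1/2 * (norm (a - c''))\<^sup>2) + \<psi> c'' \<le> ereal (1/2 * (norm (a - c'))\<^sup>2) + \<psi> c'"
  then have "ereal (1/2 * (norm (a - c''))\<^sup>2) + \<psi> c'' \<le> ereal (1/2 * (norm (a - c))\<^sup>2 + v)"
    by (metis finite plus_ereal.simps(1))
  with growth[of c''] have "ereal (1/2 * (norm (a - c))\<^sup>2 + v + 1/2 * (norm (c - c''))\<^sup>2) \<le> ereal (1/2 * (norm (a - c))\<^sup>2 + v)"
    by (rule order_trans)
  then show "c'' = c" by simp
qed

lemma prox_conj_fun_subgradient:
  assumes "subgradient Q y c"
  shows "prox (conj_fun Q) (c + y) = c"
proof (rule prox_eqI[where \<psi> = "conj_fun Q", OF conj_fun_subgradient[OF assms]])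
  fix c'
  have "1/2 * (norm (c + y - c))\<^sup>2 + (c \<bullet> y - Q y) + 1/2 * (norm (c - c'))\<^sup>2
      = 1/2 * (norm (c + y - c'))\<^sup>2 + (y \<bullet> c' - Q y)"
    by (simp add: power2_norm_eq_inner inner_add_left inner_add_right inner_diff_left
        inner_diff_right inner_commute algebra_simps)
  then show "ereal (1/2 * (norm (c + y - c))\<^sup>2 + (c \<bullet> y - Q y) + 1/2 * (norm (c - c'))\<^sup>2)
      \<le> ereal (1/2 * (norm (c + y - c'))\<^sup>2) + conj_fun Q c'"
    using conj_fun_ge[of y c' Q] by (metis add_left_mono plus_ereal.simps(1))
qed

lemma exists_proximal_point:
  fixes Q :: "'a::euclidean_space \<Rightarrow> real"
  assumes cont: "continuous_on UNIV Q" and bound: "\<And>z. m \<le> Q z"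
  shows "\<exists>p. \<forall>z. 1/2 * (norm (a - p))\<^sup>2 + Q p \<le> 1/2 * (norm (a - z))\<^sup>2 + Q z"
proof -
  define h where "h z = 1/2 * (norm (a - z))\<^sup>2 + Q z" for z
  \<comment> \<open>R is chosen so that h z > h a outside cball a R.\<close>
  define s where "s = sqrt (2 * (Q a - m))"
  define R where "R = s + 1"
  have "0 \<le> s" "s\<^sup>2 = 2 * (Q a - m)"
    using bound[of a] by (auto simp: s_def)
  then have R_pos: "R > 0" and R_sq: "2 * (Q a - m) < R\<^sup>2"
    unfolding R_def by (auto simp: power2_sum)
  have "continuous_on (cball a R) h"
    unfolding h_def by (intro continuous_intros continuous_on_subset[OF cont]) auto
  then obtain p where "p \<in> cball a R" and p_min: "\<And>z. z \<in> cball a R \<Longrightarrow> h p \<le> h z"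
    using continuous_attains_inf[of "cball a R" h] R_pos by auto
  have "h p \<le> h z" for z
  proof (cases "z \<in> cball a R")
    case False
    then have "R\<^sup>2 < (norm (a - z))\<^sup>2"
      using R_pos by (intro power_strict_mono) (auto simp: dist_norm)
    then have "h a < h z" using R_sq bound[of z] by (simp add: h_def)
    moreover have "h p \<le> h a" using p_min R_pos by simp
    ultimately show ?thesis by simp
  qed (use p_min in auto)
  then show ?thesis unfolding h_def by blast
qed

lemma proximal_point_subgradient:
  fixes Q :: "'a::real_inner \<Rightarrow> real"
  assumes convex: "convex_on UNIV Q"
    and p_min: "\<And>z. 1/2 * (norm (a - p))\<^sup>2 + Q p \<le> 1/2 * (norm (a - z))\<^sup>2 + Q z"
  shows "subgradient Q p (a - p)"
  unfolding subgradient_def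
proof
  fix z
  define d where "d = z - p"
  have step: "Q p + (a - p) \<bullet> d \<le> Q z + t / 2 * (norm d)\<^sup>2" if t: "0 < t" "t \<le> 1" for t
  proof -
    have "(norm (a - (p + t *\<^sub>R d)))\<^sup>2 = (norm (a - p))\<^sup>2 - 2 * t * ((a - p) \<bullet> d) + t\<^sup>2 * (norm d)\<^sup>2"
      unfolding power2_norm_eq_inner
      by (simp add: inner_diff_left inner_diff_right inner_add_left inner_add_right
          inner_commute power2_eq_square algebra_simps)
    moreover have "Q (p + t *\<^sub>R d) \<le> (1 - t) * Q p + t * Q z"
      using convex_onD[OF convex, of t p z] t by (simp add: d_def algebra_simps)
    ultimately have "t * (Q p + (a - p) \<bullet> d) \<le> t * (Q z + t / 2 * (norm d)\<^sup>2)"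
      using p_min[of "p + t *\<^sub>R d"] by (simp add: algebra_simps power2_eq_square)
    then show ?thesis using t by simp
  qed
  have "Q p + (a - p) \<bullet> d \<le> Q z + e" if "e > 0" for e
  proof -
    define t where "t = min 1 (e / ((norm d)\<^sup>2 + 1))"
    have pos: "0 < (norm d)\<^sup>2 + 1" by (simp add: add_nonneg_pos)
    then have "0 < t" "t \<le> 1" using \<open>e > 0\<close> by (auto simp: t_def)
    moreover have "t / 2 * (norm d)\<^sup>2 \<le> e"
    proof -
      have "t * (norm d)\<^sup>2 \<le> e / ((norm d)\<^sup>2 + 1) * ((norm d)\<^sup>2 + 1)"
        unfolding t_def using pos \<open>e > 0\<close> by (intro mult_mono) auto
      then show ?thesis using pos \<open>e > 0\<close> by simp
    qed
    ultimately show ?thesis using step[of t] by linarith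
  qed
  then show "Q p + (a - p) \<bullet> (z - p) \<le> Q z"
    unfolding d_def by (rule field_le_epsilon)
qed

lemma prox_conj_fun_iff_subgradient:
  fixes Q :: "real^'m::finite \<Rightarrow> real"
  assumes convex: "convex_on UNIV Q" and bound: "\<And>z. m \<le> Q z"
  shows "c = prox (conj_fun Q) (c + y) \<longleftrightarrow> subgradient Q y c"
proof
  \<comment> \<open>prox is defined by THE; the proximal point p of Q at c + y (Moreau decomposition) exhibits
    the minimiser, so the fixed point equation forces p = y.\<close>
  assume c: "c = prox (conj_fun Q) (c + y)"
  obtain p where "\<forall>z. 1/2 * (norm (c + y - p))\<^sup>2 + Q p \<le> 1/2 * (norm (c + y - z))\<^sup>2 + Q z"
    using exists_proximal_point[OF convex_on_continuous[OF open_UNIV convex] bound] by blast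
  then have p: "subgradient Q p (c + y - p)"
    using proximal_point_subgradient[OF convex] by blast
  then have "prox (conj_fun Q) ((c + y - p) + p) = c + y - p"
    by (rule prox_conj_fun_subgradient)
  with c have "p = y" by simp
  with p show "subgradient Q y c" by simp
next
  assume "subgradient Q y c"
  then show "c = prox (conj_fun Q) (c + y)"
    by (simp add: prox_conj_fun_subgradient)
qed

lemma convex_strict_epigraph:
  assumes "convex_on UNIV f"
  shows "convex {(z, r). f z < r}"
proof (rule convexI)
  fix p q :: "'a \<times> real" and a b :: real
  assume "p \<in> {(z, r). f z < r}" "q \<in> {(z, r). f z < r}" and ab: "0 \<le> a" "0 \<le> b" "a + b = 1"
  then obtain z1 r1 z2 r2 where pq: "p = (z1, r1)" "q = (z2, r2)" "f z1 < r1" "f z2 < r2"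
    by auto
  have "a = 1 - b" using ab by simp
  then have "f (a *\<^sub>R z1 + b *\<^sub>R z2) \<le> a * f z1 + b * f z2"
    using convex_onD[OF assms, of b z1 z2] ab by (simp only: \<open>a = 1 - b\<close>) simp
  also have "\<dots> < a * r1 + b * r2"
  proof (cases "a = 0")
    case False
    then show ?thesis
      using pq ab by (intro add_less_le_mono mult_strict_left_mono mult_left_mono) auto
  qed (use pq ab in auto)
  finally show "a *\<^sub>R p + b *\<^sub>R q \<in> {(z, r). f z < r}"
    using pq by simp
qed

lemma supporting_hyperplane_strict_epigraph:
  fixes Q :: "'a::real_inner \<Rightarrow> real"
  assumes nonzero: "(d, \<tau>) \<noteq> 0"
    and below: "\<And>z r. Q z < r \<Longrightarrow> d \<bullet> z + \<tau> * r \<le> b"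
    and above: "b \<le> d \<bullet> y + \<tau> * Q y"
  shows "\<tau> < 0" and "b = d \<bullet> y + \<tau> * Q y" and "subgradient Q y ((-1 / \<tau>) *\<^sub>R d)"
proof -
  have "d \<bullet> y + \<tau> * (Q y + 1) \<le> b" by (rule below) simp
  with above have "\<tau> \<le> 0" by (simp add: distrib_left)
  moreover have "\<tau> \<noteq> 0"
  proof
    assume "\<tau> = 0"
    then have "d \<bullet> (y + d) \<le> d \<bullet> y"
      using below[of "y + d" "Q (y + d) + 1"] above by simp
    then have "d \<bullet> d \<le> 0" by (simp add: inner_add_right)
    then have "d = 0" by (metis inner_gt_zero_iff not_le)
    with \<open>\<tau> = 0\<close> nonzero show False by (simp add: zero_prod_def)
  qed
  ultimately show neg: "\<tau> < 0" by simp
  have graph: "d \<bullet> z + \<tau> * Q z \<le> b" for z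
  proof (rule field_le_epsilon)
    fix e :: real
    assume "e > 0"
    then have "d \<bullet> z + \<tau> * (Q z + e / - \<tau>) \<le> b" using neg by (intro below) (simp add: divide_pos_neg)
    moreover have "\<tau> * (Q z + e / - \<tau>) = \<tau> * Q z - e" using neg by (simp add: field_simps)
    ultimately show "d \<bullet> z + \<tau> * Q z \<le> b + e" by simp
  qed
  then show "b = d \<bullet> y + \<tau> * Q y" using above by (intro antisym) auto
  show "subgradient Q y ((-1 / \<tau>) *\<^sub>R d)"
    unfolding subgradient_def
  proof
    fix z
    have "d \<bullet> (z - y) \<le> - \<tau> * (Q z - Q y)"
      using graph[of z] above by (simp add: inner_diff_right algebra_simps)
    then show "Q y + (-1 / \<tau>) *\<^sub>R d \<bullet> (z - y) \<le> Q z"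
      using neg by (simp add: field_simps)
  qed
qed

lemma convex_reflect_snd:
  fixes S :: "('a::real_vector \<times> real) set"
  assumes "convex S"
  shows "convex ((\<lambda>(z, s). (z, K - s)) ` S)"
proof (rule convexI)
  fix p q and a b :: real
  assume "p \<in> (\<lambda>(z, s). (z, K - s)) ` S" "q \<in> (\<lambda>(z, s). (z, K - s)) ` S"
    and ab: "0 \<le> a" "0 \<le> b" "a + b = 1"
  then obtain z1 s1 z2 s2 where "(z1, s1) \<in> S" "(z2, s2) \<in> S"
    and pq: "p = (z1, K - s1)" "q = (z2, K - s2)" by auto
  then have "a *\<^sub>R (z1, s1) + b *\<^sub>R (z2, s2) \<in> S"
    using ab by (intro convexD[OF assms])
  moreover have "a *\<^sub>R p + b *\<^sub>R q = (a *\<^sub>R z1 + b *\<^sub>R z2, (a + b) * K - (a * s1 + b * s2))"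
    unfolding pq by (simp add: algebra_simps)
  ultimately show "a *\<^sub>R p + b *\<^sub>R q \<in> (\<lambda>(z, s). (z, K - s)) ` S"
    using ab(3) by (intro image_eqI[where x = "a *\<^sub>R (z1, s1) + b *\<^sub>R (z2, s2)"]) auto
qed

lemma exists_subgradient_of_composite_minimiser:
  fixes Q :: "'b::euclidean_space \<Rightarrow> real" and L :: "'a \<Rightarrow> 'b"
  assumes convex: "convex_on UNIV Q"
    and epigraph: "convex {(L x, s) | x s. x \<in> X \<and> g x \<le> s}"
    and x0: "x0 \<in> X"
    and min: "\<And>x. x \<in> X \<Longrightarrow> Q (L x0) + g x0 \<le> Q (L x) + g x"
  shows "\<exists>c. subgradient Q (L x0) c \<and> (\<forall>x\<in>X. g x0 + c \<bullet> L x0 \<le> g x + c \<bullet> L x)"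
proof -
  \<comment> \<open>A and B are disjoint by minimality, and B touches the graph of Q at (L x0, Q (L x0)),
    so a separating hyperplane supports the strict epigraph there.\<close>
  define y0 where "y0 = L x0"
  define K where "K = Q y0 + g x0"
  define A where "A = {(z, r). Q z < r}"
  define B where "B = {(L x, K - s) | x s. x \<in> X \<and> g x \<le> s}"
  have "B = (\<lambda>(z, s). (z, K - s)) ` {(L x, s) | x s. x \<in> X \<and> g x \<le> s}"
    unfolding B_def by (auto simp: image_def)
  then have "convex B"
    using convex_reflect_snd[OF epigraph] by simp
  moreover have "A \<inter> B = {}"
  proof (rule equals0I)
    fix p assume "p \<in> A \<inter> B"
    then obtain x s where "x \<in> X" "g x \<le> s" "Q (L x) < K - s"
      unfolding A_def B_def by auto
    with min[of x] show False unfolding K_def y0_def by linarith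
  qed
  moreover have "(y0, Q y0 + 1) \<in> A"
    unfolding A_def by simp
  moreover have y0_B: "(y0, Q y0) \<in> B"
    using x0 unfolding B_def K_def y0_def by force
  ultimately obtain n b where "n \<noteq> 0" and sep_A: "\<forall>p\<in>A. n \<bullet> p \<le> b" and sep_B: "\<forall>p\<in>B. b \<le> n \<bullet> p"
    using separating_hyperplane_sets[OF convex_strict_epigraph[OF convex]] unfolding A_def by blast
  obtain d \<tau> where n: "n = (d, \<tau>)" by fastforce
  have below: "d \<bullet> z + \<tau> * r \<le> b" if "Q z < r" for z r
    using sep_A that unfolding A_def n by auto
  have above: "b \<le> d \<bullet> y0 + \<tau> * Q y0"
    using sep_B y0_B unfolding n by auto
  have hyperplane: "\<tau> < 0" "b = d \<bullet> y0 + \<tau> * Q y0" "subgradient Q y0 ((-1 / \<tau>) *\<^sub>R d)"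
    using supporting_hyperplane_strict_epigraph[of d \<tau> Q b y0, OF _ below above] \<open>n \<noteq> 0\<close>
    unfolding n by auto
  define c where "c = (-1 / \<tau>) *\<^sub>R d"
  have d: "d = (- \<tau>) *\<^sub>R c"
    using hyperplane(1) by (simp add: c_def)
  have "g x0 + c \<bullet> y0 \<le> g x + c \<bullet> L x" if "x \<in> X" for x
  proof -
    have "b \<le> d \<bullet> L x + \<tau> * (K - g x)"
      using sep_B that unfolding B_def n by auto
    then have "- \<tau> * (g x0 + c \<bullet> y0) \<le> - \<tau> * (g x + c \<bullet> L x)"
      using hyperplane(2) unfolding K_def d by (simp add: algebra_simps)
    then show ?thesis
      using hyperplane(1) by simp
  qed
  then show ?thesis
    using hyperplane(3) unfolding y0_def c_def by blast
qed

lemma minimiser_composite_iff: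
  fixes Q :: "'b::euclidean_space \<Rightarrow> real" and L :: "'a \<Rightarrow> 'b"
  assumes "convex_on UNIV Q"
    and "convex {(L x, s) | x s. x \<in> X \<and> g x \<le> s}"
    and "x0 \<in> X"
  shows "(\<forall>x\<in>X. Q (L x0) + g x0 \<le> Q (L x) + g x) \<longleftrightarrow>
         (\<exists>c. subgradient Q (L x0) c \<and> (\<forall>x\<in>X. g x0 + c \<bullet> L x0 \<le> g x + c \<bullet> L x))"
proof
  assume "\<forall>x\<in>X. Q (L x0) + g x0 \<le> Q (L x) + g x"
  then show "\<exists>c. subgradient Q (L x0) c \<and> (\<forall>x\<in>X. g x0 + c \<bullet> L x0 \<le> g x + c \<bullet> L x)"
    using exists_subgradient_of_composite_minimiser[OF assms] by blast
next
  assume "\<exists>c. subgradient Q (L x0) c \<and> (\<forall>x\<in>X. g x0 + c \<bullet> L x0 \<le> g x + c \<bullet> L x)"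
  then obtain c where sub: "subgradient Q (L x0) c"
    and lin: "\<forall>x\<in>X. g x0 + c \<bullet> L x0 \<le> g x + c \<bullet> L x" by blast
  show "\<forall>x\<in>X. Q (L x0) + g x0 \<le> Q (L x) + g x"
  proof
    fix x assume "x \<in> X"
    have "Q (L x0) + c \<bullet> (L x - L x0) \<le> Q (L x)"
      using sub unfolding subgradient_def by blast
    with lin \<open>x \<in> X\<close> show "Q (L x0) + g x0 \<le> Q (L x) + g x"
      by (fastforce simp: inner_diff_right)
  qed
qed

lemma in_c0_imp_Bseq: "in_c0 w \<Longrightarrow> Bseq w"
  unfolding in_c0_def by (rule convergent_imp_Bseq) (auto simp: convergent_def)

lemma summable_mult_l1:
  assumes "Bseq w" and "in_l1 x"
  shows "summable (\<lambda>j. w j * x j)"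
proof -
  obtain B where "\<And>j. \<bar>w j\<bar> \<le> B"
    using BseqD[OF assms(1)] by auto
  then have "norm (w j * x j) \<le> B * \<bar>x j\<bar>" for j
    by (simp add: abs_mult mult_right_mono)
  with summable_mult[OF assms(2)[unfolded in_l1_def], of B] show ?thesis
    by (rule summable_comparison_test')
qed

lemma in_c0_opL_adj: "(\<And>i. in_c0 (u i)) \<Longrightarrow> in_c0 (opL_adj u c)"
  unfolding in_c0_def opL_adj_def by (intro tendsto_null_sum tendsto_mult_right_zero)

lemma inner_opL:
  fixes u :: "'m::finite \<Rightarrow> nat \<Rightarrow> real"
  assumes u: "\<And>i. Bseq (u i)" and x: "in_l1 x"
  shows "c \<bullet> opL u x = seq_inner (opL_adj u c) x"
proof -
  have s: "summable (\<lambda>j. u i j * x j)" for i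
    using summable_mult_l1[OF u x] .
  have "c \<bullet> opL u x = (\<Sum>i\<in>UNIV. c $ i * (\<Sum>j. u i j * x j))"
    by (simp add: inner_vec_def opL_def seq_inner_def)
  also have "\<dots> = (\<Sum>i\<in>UNIV. \<Sum>j. c $ i * (u i j * x j))"
    using s by (simp add: suminf_mult)
  also have "\<dots> = (\<Sum>j. \<Sum>i\<in>UNIV. c $ i * (u i j * x j))"
    using s by (intro suminf_sum[symmetric] summable_mult)
  also have "\<dots> = seq_inner (opL_adj u c) x"
    by (simp add: seq_inner_def opL_adj_def sum_distrib_right mult.assoc)
  finally show ?thesis .
qed

lemma in_l1_lincomb:
  assumes "in_l1 x" and "in_l1 y"
  shows "in_l1 (\<lambda>j. a * x j + b * y j)"
proof -
  have "summable (\<lambda>j. \<bar>a\<bar> * \<bar>x j\<bar> + \<bar>b\<bar> * \<bar>y j\<bar>)"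
    using assms unfolding in_l1_def by (intro summable_add summable_mult)
  moreover have "norm \<bar>a * x j + b * y j\<bar> \<le> \<bar>a\<bar> * \<bar>x j\<bar> + \<bar>b\<bar> * \<bar>y j\<bar>" for j
    using abs_triangle_ineq[of "a * x j" "b * y j"] by (simp add: abs_mult)
  ultimately show ?thesis
    unfolding in_l1_def by (rule summable_comparison_test')
qed

lemma l1_norm_lincomb_le:
  assumes x: "in_l1 x" and y: "in_l1 y" and "0 \<le> a" "0 \<le> b"
  shows "l1_norm (\<lambda>j. a * x j + b * y j) \<le> a * l1_norm x + b * l1_norm y"
proof -
  have sx: "summable (\<lambda>j. a * \<bar>x j\<bar>)" and sy: "summable (\<lambda>j. b * \<bar>y j\<bar>)"
    using x y unfolding in_l1_def by (auto intro: summable_mult)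
  have "l1_norm (\<lambda>j. a * x j + b * y j) \<le> (\<Sum>j. a * \<bar>x j\<bar> + b * \<bar>y j\<bar>)"
    unfolding l1_norm_def
  proof (rule suminf_le)
    show "\<bar>a * x j + b * y j\<bar> \<le> a * \<bar>x j\<bar> + b * \<bar>y j\<bar>" for j
      using abs_triangle_ineq[of "a * x j" "b * y j"] assms(3,4) by (simp add: abs_mult)
    show "summable (\<lambda>j. \<bar>a * x j + b * y j\<bar>)"
      using in_l1_lincomb[OF x y] unfolding in_l1_def .
    show "summable (\<lambda>j. a * \<bar>x j\<bar> + b * \<bar>y j\<bar>)"
      using sx sy by (rule summable_add)
  qed
  also have "\<dots> = a * l1_norm x + b * l1_norm y"
    using x y sx sy unfolding l1_norm_def in_l1_def by (simp add: suminf_add[symmetric] suminf_mult)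
  finally show ?thesis .
qed

lemma seq_inner_lincomb:
  assumes w: "Bseq w" and x: "in_l1 x" and y: "in_l1 y"
  shows "seq_inner w (\<lambda>j. a * x j + b * y j) = a * seq_inner w x + b * seq_inner w y"
proof -
  have sx: "summable (\<lambda>j. a * (w j * x j))" and sy: "summable (\<lambda>j. b * (w j * y j))"
    using summable_mult_l1[OF w x] summable_mult_l1[OF w y] by (auto intro: summable_mult)
  have "seq_inner w (\<lambda>j. a * x j + b * y j) = (\<Sum>j. a * (w j * x j) + b * (w j * y j))"
    unfolding seq_inner_def by (simp add: algebra_simps)
  also have "\<dots> = a * seq_inner w x + b * seq_inner w y"
    using summable_mult_l1[OF w x] summable_mult_l1[OF w y]
    unfolding suminf_add[OF sx sy, symmetric] seq_inner_def by (simp add: suminf_mult)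
  finally show ?thesis .
qed

lemma convex_opL_l1_epigraph:
  fixes u :: "'m::finite \<Rightarrow> nat \<Rightarrow> real"
  assumes u: "\<And>i. Bseq (u i)" and lam: "0 \<le> lam"
  shows "convex {(opL u x, s) | x s. in_l1 x \<and> lam * l1_norm x \<le> s}"
proof (rule convexI)
  fix p q and a b :: real
  assume "p \<in> {(opL u x, s) | x s. in_l1 x \<and> lam * l1_norm x \<le> s}"
    and "q \<in> {(opL u x, s) | x s. in_l1 x \<and> lam * l1_norm x \<le> s}"
    and ab: "0 \<le> a" "0 \<le> b" "a + b = 1"
  then obtain x1 s1 x2 s2 where pq: "p = (opL u x1, s1)" "q = (opL u x2, s2)"
    and x: "in_l1 x1" "in_l1 x2" and s: "lam * l1_norm x1 \<le> s1" "lam * l1_norm x2 \<le> s2"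
    by blast
  define x where "x = (\<lambda>j. a * x1 j + b * x2 j)"
  have opL_x: "opL u x = a *\<^sub>R opL u x1 + b *\<^sub>R opL u x2"
    unfolding x_def opL_def by (simp add: vec_eq_iff seq_inner_lincomb[OF u x])
  moreover have "lam * l1_norm x \<le> a * s1 + b * s2"
  proof -
    have "lam * l1_norm x \<le> a * (lam * l1_norm x1) + b * (lam * l1_norm x2)"
      using mult_left_mono[OF l1_norm_lincomb_le[OF x ab(1,2)] lam]
      unfolding x_def by (simp add: algebra_simps)
    also have "\<dots> \<le> a * s1 + b * s2"
      using s ab by (intro add_mono mult_left_mono) auto
    finally show ?thesis .
  qed
  moreover have "in_l1 x"
    unfolding x_def using x by (rule in_l1_lincomb)
  ultimately have "(opL u x, a * s1 + b * s2) \<in> {(opL u x, s) | x s. in_l1 x \<and> lam * l1_norm x \<le> s}"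
    by blast
  then show "a *\<^sub>R p + b *\<^sub>R q \<in> {(opL u x, s) | x s. in_l1 x \<and> lam * l1_norm x \<le> s}"
    unfolding pq opL_x by simp
qed

lemma sums_fun_upd:
  fixes f :: "nat \<Rightarrow> 'a::real_normed_vector"
  assumes "f sums a"
  shows "f(j := b) sums (a - f j + b)"
proof -
  have "(\<lambda>n. f n + (if n = j then b - f j else 0)) sums (a + (b - f j))"
    using sums_add[OF assms sums_single[of j "\<lambda>_. b - f j"]] .
  moreover have "(\<lambda>n. f n + (if n = j then b - f j else 0)) = f(j := b)"
    by (simp add: fun_eq_iff)
  ultimately show ?thesis by (simp add: algebra_simps)
qed

lemma l1_fun_upd:
  assumes "in_l1 x"
  shows "in_l1 (x(j := s))" and "l1_norm (x(j := s)) = l1_norm x - \<bar>x j\<bar> + \<bar>s\<bar>"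
proof -
  have "(\<lambda>n. \<bar>x n\<bar>) sums l1_norm x"
    using assms unfolding in_l1_def l1_norm_def by (rule summable_sums)
  from sums_fun_upd[OF this, of j "\<bar>s\<bar>"]
  have "(\<lambda>n. \<bar>(x(j := s)) n\<bar>) sums (l1_norm x - \<bar>x j\<bar> + \<bar>s\<bar>)"
    by (simp add: fun_upd_def if_distrib)
  then show "in_l1 (x(j := s))" and "l1_norm (x(j := s)) = l1_norm x - \<bar>x j\<bar> + \<bar>s\<bar>"
    unfolding in_l1_def l1_norm_def by (auto simp: sums_iff)
qed

lemma seq_inner_fun_upd:
  assumes "Bseq w" and "in_l1 x"
  shows "seq_inner w (x(j := s)) = seq_inner w x - w j * x j + w j * s"
proof -
  have "(\<lambda>n. w n * x n) sums seq_inner w x"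
    unfolding seq_inner_def using summable_mult_l1[OF assms] by (rule summable_sums)
  from sums_fun_upd[OF this, of j "w j * s"]
  have "(\<lambda>n. w n * (x(j := s)) n) sums (seq_inner w x - w j * x j + w j * s)"
    by (simp add: fun_upd_def if_distrib cong: if_cong)
  then show ?thesis
    unfolding seq_inner_def by (rule sums_unique[symmetric])
qed

lemma abs_linear_minimiser_iff:
  fixes lam w t :: real
  shows "(\<forall>s. lam * \<bar>t\<bar> + w * t \<le> lam * \<bar>s\<bar> + w * s) \<longleftrightarrow>
         \<bar>w\<bar> \<le> lam \<and> (t \<noteq> 0 \<longrightarrow> w = - lam * sgn t)"
proof
  assume min: "\<forall>s. lam * \<bar>t\<bar> + w * t \<le> lam * \<bar>s\<bar> + w * s"
  define K where "K = lam * \<bar>t\<bar> + w * t"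
  have bound: "\<bar>w\<bar> \<le> lam"
  proof (rule ccontr)
    \<comment> \<open>Otherwise the objective tends to -\<infinity> as s moves away from 0 against the sign of w.\<close>
    assume "\<not> \<bar>w\<bar> \<le> lam"
    define T where "T = (\<bar>K\<bar> + 1) / (\<bar>w\<bar> - lam)"
    define s where "s = (if w < 0 then T else - T)"
    have "T \<ge> 0" using \<open>\<not> \<bar>w\<bar> \<le> lam\<close> by (simp add: T_def)
    have "K \<le> lam * \<bar>s\<bar> + w * s"
      using min unfolding K_def by blast
    also have "\<dots> = - (\<bar>w\<bar> - lam) * T"
      using \<open>T \<ge> 0\<close> by (auto simp: s_def algebra_simps)
    also have "\<dots> = - (\<bar>K\<bar> + 1)"
      using \<open>\<not> \<bar>w\<bar> \<le> lam\<close> by (simp add: T_def field_simps)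
    finally show False by simp
  qed
  moreover have "K = 0"
  proof (rule antisym)
    show "K \<le> 0" using min unfolding K_def by (metis abs_zero add.right_neutral mult_zero_right)
    have "\<bar>w * t\<bar> \<le> lam * \<bar>t\<bar>" using bound by (simp add: abs_mult mult_right_mono)
    then show "0 \<le> K" unfolding K_def by linarith
  qed
  then have "t * (w + lam * sgn t) = 0"
    unfolding K_def abs_sgn[of t] by (simp add: algebra_simps)
  then have "t \<noteq> 0 \<longrightarrow> w = - lam * sgn t"
    by (auto simp: eq_neg_iff_add_eq_0)
  ultimately show "\<bar>w\<bar> \<le> lam \<and> (t \<noteq> 0 \<longrightarrow> w = - lam * sgn t)" by blast
next
  assume opt: "\<bar>w\<bar> \<le> lam \<and> (t \<noteq> 0 \<longrightarrow> w = - lam * sgn t)"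
  then have "w * t = - lam * \<bar>t\<bar>"
    by (cases "t = 0") (auto simp: abs_if sgn_if)
  moreover have "- lam * \<bar>s\<bar> \<le> w * s" for s
  proof -
    have "\<bar>w * s\<bar> \<le> lam * \<bar>s\<bar>" using opt by (simp add: abs_mult mult_right_mono)
    then show ?thesis by (simp add: abs_le_iff)
  qed
  ultimately show "\<forall>s. lam * \<bar>t\<bar> + w * t \<le> lam * \<bar>s\<bar> + w * s"
    by (metis add.right_inverse add_le_cancel_left mult_minus_left)
qed

lemma l1_linear_minimiser_iff:
  assumes w: "Bseq w" and x0: "in_l1 x0"
  shows "(\<forall>x. in_l1 x \<longrightarrow> lam * l1_norm x0 + seq_inner w x0 \<le> lam * l1_norm x + seq_inner w x)
     \<longleftrightarrow> (\<forall>j. \<bar>w j\<bar> \<le> lam \<and> (x0 j \<noteq> 0 \<longrightarrow> w j = - lam * sgn (x0 j)))"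
proof
  assume min: "\<forall>x. in_l1 x \<longrightarrow> lam * l1_norm x0 + seq_inner w x0 \<le> lam * l1_norm x + seq_inner w x"
  show "\<forall>j. \<bar>w j\<bar> \<le> lam \<and> (x0 j \<noteq> 0 \<longrightarrow> w j = - lam * sgn (x0 j))"
  proof
    fix j
    have "lam * \<bar>x0 j\<bar> + w j * x0 j \<le> lam * \<bar>s\<bar> + w j * s" for s
    proof -
      have "lam * l1_norm x0 + seq_inner w x0 \<le> lam * l1_norm (x0(j := s)) + seq_inner w (x0(j := s))"
        using min l1_fun_upd(1)[OF x0] by blast
      then show ?thesis
        unfolding l1_fun_upd(2)[OF x0] seq_inner_fun_upd[OF w x0] by (simp add: algebra_simps)
    qed
    then show "\<bar>w j\<bar> \<le> lam \<and> (x0 j \<noteq> 0 \<longrightarrow> w j = - lam * sgn (x0 j))"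
      using abs_linear_minimiser_iff by blast
  qed
next
  assume "\<forall>j. \<bar>w j\<bar> \<le> lam \<and> (x0 j \<noteq> 0 \<longrightarrow> w j = - lam * sgn (x0 j))"
  then have termwise: "lam * \<bar>x0 j\<bar> + w j * x0 j \<le> lam * \<bar>x j\<bar> + w j * x j" for x j
    using abs_linear_minimiser_iff by blast
  have sums: "(\<lambda>j. lam * \<bar>x j\<bar> + w j * x j) sums (lam * l1_norm x + seq_inner w x)" if "in_l1 x" for x
    using that summable_mult_l1[OF w that] unfolding in_l1_def l1_norm_def seq_inner_def
    by (intro sums_add sums_mult summable_sums)
  show "\<forall>x. in_l1 x \<longrightarrow> lam * l1_norm x0 + seq_inner w x0 \<le> lam * l1_norm x + seq_inner w x"
  proof (intro allI impI)
    fix x assume "in_l1 x"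
    from sums_le[OF termwise[where x = x] sums[OF x0] sums[OF this]]
    show "lam * l1_norm x0 + seq_inner w x0 \<le> lam * l1_norm x + seq_inner w x" .
  qed
qed

lemma in_c0_abs_attains_max:
  assumes "in_c0 w"
  shows "\<exists>k. \<forall>j. \<bar>w j\<bar> \<le> \<bar>w k\<bar>"
proof (cases "\<forall>j. w j = 0")
  case False
  then obtain j0 where "w j0 \<noteq> 0" by blast
  then obtain N where tail: "\<And>j. j \<ge> N \<Longrightarrow> \<bar>w j\<bar> < \<bar>w j0\<bar>"
    using assms unfolding in_c0_def LIMSEQ_def by (metis dist_real_def diff_zero zero_less_abs_iff)
  define M where "M = Max ((\<lambda>j. \<bar>w j\<bar>) ` {..max N j0})"
  have "M \<in> (\<lambda>j. \<bar>w j\<bar>) ` {..max N j0}"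
    unfolding M_def by (intro Max_in) auto
  then obtain k where "M = \<bar>w k\<bar>" by blast
  have k: "\<bar>w j\<bar> \<le> \<bar>w k\<bar>" if "j \<le> max N j0" for j
  proof -
    have "\<bar>w j\<bar> \<le> M" unfolding M_def using that by (intro Max_ge) auto
    with \<open>M = \<bar>w k\<bar>\<close> show ?thesis by simp
  qed
  show ?thesis
  proof (intro exI allI)
    fix j
    show "\<bar>w j\<bar> \<le> \<bar>w k\<bar>"
      using k[of j] k[of j0] tail[of j] by (cases "j \<le> max N j0") force+
  qed
qed simp

lemma soft_threshold_fixed_iff:
  fixes t s :: real
  shows "t = max (\<bar>t - s\<bar> - 1) 0 * sgn (t - s) \<longleftrightarrow> \<bar>s\<bar> \<le> 1 \<and> (t \<noteq> 0 \<longrightarrow> s = - sgn t)"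
proof (cases "t - s > 0")
  case True
  then show ?thesis by (cases "t - s > 1") (auto simp: sgn_if max_def)
next
  case False
  then show ?thesis by (cases "t - s < -1"; cases "t - s = 0") (auto simp: sgn_if max_def)
qed

lemma prox_l1_trunc_fixed_iff:
  assumes w: "in_c0 w" and lam: "lam > 0"
  shows "x0 = prox_l1 (\<lambda>j. x0 j - (1 / lam) * trunc_S w j) \<longleftrightarrow>
         (\<forall>j. \<bar>w j\<bar> \<le> lam \<and> (x0 j \<noteq> 0 \<longrightarrow> w j = - lam * sgn (x0 j)))"
proof -
  obtain k where k: "\<And>j. \<bar>w j\<bar> \<le> \<bar>w k\<bar>"
    using in_c0_abs_attains_max[OF w] by blast
  then have "sup_norm w = \<bar>w k\<bar>"
    unfolding sup_norm_def by (intro cSup_eq_maximum) auto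
  then have trunc_k: "trunc_S w k = w k"
    and trunc_eq: "\<And>j. trunc_S w j \<noteq> 0 \<or> \<bar>w k\<bar> \<le> \<bar>w j\<bar> \<Longrightarrow> trunc_S w j = w j"
    using k by (auto simp: trunc_S_def intro: antisym)
  have trunc_le: "\<bar>trunc_S w j\<bar> \<le> \<bar>w j\<bar>" for j
    by (simp add: trunc_S_def)
  have "x0 = prox_l1 (\<lambda>j. x0 j - (1 / lam) * trunc_S w j) \<longleftrightarrow>
        (\<forall>j. \<bar>(1 / lam) * trunc_S w j\<bar> \<le> 1 \<and> (x0 j \<noteq> 0 \<longrightarrow> (1 / lam) * trunc_S w j = - sgn (x0 j)))"
    by (simp only: prox_l1_def fun_eq_iff soft_threshold_fixed_iff)
  also have "\<dots> \<longleftrightarrow> (\<forall>j. \<bar>trunc_S w j\<bar> \<le> lam \<and> (x0 j \<noteq> 0 \<longrightarrow> trunc_S w j = - lam * sgn (x0 j)))"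
    using lam by (simp add: abs_mult field_simps)
  also have "\<dots> \<longleftrightarrow> (\<forall>j. \<bar>w j\<bar> \<le> lam \<and> (x0 j \<noteq> 0 \<longrightarrow> w j = - lam * sgn (x0 j)))"
  proof (intro iffI allI conjI impI)
    fix j
    assume opt: "\<forall>j. \<bar>trunc_S w j\<bar> \<le> lam \<and> (x0 j \<noteq> 0 \<longrightarrow> trunc_S w j = - lam * sgn (x0 j))"
    have "\<bar>trunc_S w k\<bar> \<le> lam" using opt by blast
    then show "\<bar>w j\<bar> \<le> lam" using k[of j] trunc_k by simp
    assume "x0 j \<noteq> 0"
    then show "w j = - lam * sgn (x0 j)" using opt lam trunc_eq[of j] by (auto simp: sgn_if)
  next
    fix j
    assume opt: "\<forall>j. \<bar>w j\<bar> \<le> lam \<and> (x0 j \<noteq> 0 \<longrightarrow> w j = - lam * sgn (x0 j))"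
    have "\<bar>w j\<bar> \<le> lam" using opt by blast
    with trunc_le[of j] show "\<bar>trunc_S w j\<bar> \<le> lam" by linarith
    assume "x0 j \<noteq> 0"
    then have "\<bar>w j\<bar> = lam" and "w j = - lam * sgn (x0 j)" using opt lam by (auto simp: abs_mult)
    then show "trunc_S w j = - lam * sgn (x0 j)" using opt trunc_eq[of j] by force
  qed
  finally show ?thesis .
qed

theorem mainTheorem20:
  fixes u :: "'m::finite \<Rightarrow> nat \<Rightarrow> real"
    and Q :: "real^'m \<Rightarrow> real"
    and lam :: real
    and x0 :: "nat \<Rightarrow> real"
  assumes u_c0: "\<And>i. in_c0 (u i)"
    and Q_convex: "convex_on UNIV Q"
    and Q_nonneg: "\<And>a. Q a \<ge> 0"
    and lam_pos: "lam > 0"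
    and x0_l1: "in_l1 x0"
  shows "(\<forall>x. in_l1 x \<longrightarrow>
             Q (opL u x0) + lam * l1_norm x0 \<le> Q (opL u x) + lam * l1_norm x)
         \<longleftrightarrow>
         (\<exists>c. c = prox (conj_fun Q) (c + opL u x0) \<and>
              x0 = prox_l1 (\<lambda>j. x0 j - (1 / lam) * trunc_S (opL_adj u c) j))"
proof -
  have u_bounded: "\<And>i. Bseq (u i)"
    using u_c0 by (rule in_c0_imp_Bseq)
  have adj_c0: "in_c0 (opL_adj u c)" for c
    using in_c0_opL_adj[of u, OF u_c0] .
  have "(\<forall>x. in_l1 x \<longrightarrow> Q (opL u x0) + lam * l1_norm x0 \<le> Q (opL u x) + lam * l1_norm x)
    \<longleftrightarrow> (\<exists>c. subgradient Q (opL u x0) c \<and>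
           (\<forall>x. in_l1 x \<longrightarrow> lam * l1_norm x0 + c \<bullet> opL u x0 \<le> lam * l1_norm x + c \<bullet> opL u x))"
    using minimiser_composite_iff[OF Q_convex, of "opL u" "{x. in_l1 x}" "\<lambda>x. lam * l1_norm x" x0]
      convex_opL_l1_epigraph[of u lam, OF u_bounded] lam_pos x0_l1 by simp
  also have "\<dots> \<longleftrightarrow> (\<exists>c. c = prox (conj_fun Q) (c + opL u x0) \<and>
           (\<forall>x. in_l1 x \<longrightarrow> lam * l1_norm x0 + seq_inner (opL_adj u c) x0
                                \<le> lam * l1_norm x + seq_inner (opL_adj u c) x))"
    using prox_conj_fun_iff_subgradient[OF Q_convex Q_nonneg] inner_opL[of u, OF u_bounded] x0_l1
    by auto
  also have "\<dots> \<longleftrightarrow> (\<exists>c. c = prox (conj_fun Q) (c + opL u x0) \<and>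
              x0 = prox_l1 (\<lambda>j. x0 j - (1 / lam) * trunc_S (opL_adj u c) j))"
    using l1_linear_minimiser_iff[OF in_c0_imp_Bseq[OF adj_c0] x0_l1]
      prox_l1_trunc_fixed_iff[OF adj_c0 lam_pos] by auto
  finally show ?thesis .
qed

end
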